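(* Let $(X,d)$ and $(Y,d')$ be complete metric spaces, and let $\mathcal{F}=\{X; f_{\lambda}\mid\lambda\in\Lambda\}$ and $\mathcal{G}=\{Y; g_{\gamma}\mid\gamma\in\Gamma\}$ be parameterized iterated function systems. Equip $X\times Y$ with the metric $D((x_1,y_1),(x_2,y_2))=\max\{d(x_1,x_2),d'(y_1,y_2)\}$ and let $\mathcal{F}\times\mathcal{G}=\{X\times Y; f_\lambda\times g_\gamma\mid \lambda\in\Lambda,\gamma\in\Gamma\}$, where $(f_\lambda\times g_\gamma)(x,y)=(f_\lambda(x),g_\gamma(y))$. Then $\mathcal{F}\times\mathcal{G}$ has the average shadowing property if and only if both $\mathcal{F}$ and $\mathcal{G}$ have the average shadowing property.
   Context: A parameterized iterated function system (IFS) $\mathcal{H}=\{Z; h_{\mu}\mid\mu\in M\}$ on a metric space $(Z,\rho)$ is a family of continuous maps $h_\mu:Z\to Z$ indexed by a finite nonempty set $M$. For $\sigma=(\mu_0,\mu_1,\dots)\in M^{\mathbb{Z}_+}$ write $\mathcal{H}_{\sigma_n}=h_{\mu_{n-1}}\circ\cdots\circ h_{\mu_0}$ for $n\ge1$ and $\mathcal{H}_{\sigma_0}=\mathrm{id}_Z$. For $\delta>0$, a sequence $(z_i)_{i\ge0}$ in $Z$ is a $\delta$-average pseudo-orbit of $\mathcal{H}$ if there exist a natural number $N$ and $\sigma=(\mu_0,\mu_1,\dots)\in M^{\mathbb{Z}_+}$ such that for all $n\ge N$, $\frac1n\sum_{i=0}^{n-1}\rho(h_{\mu_i}(z_i),z_{i+1})<\delta$.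 A sequence $(z_i)_{i\ge0}$ is $\epsilon$-shadowed in average by $w\in Z$ if there exists $\sigma\in M^{\mathbb{Z}_+}$ with $\limsup_{n\to\infty}\frac1n\sum_{i=0}^{n-1}\rho(\mathcal{H}_{\sigma_i}(w),z_i)<\epsilon$. $\mathcal{H}$ has the average shadowing property if for every $\epsilon>0$ there is $\delta>0$ such that every $\delta$-average pseudo-orbit of $\mathcal{H}$ is $\epsilon$-shadowed in average by some point of $Z$. *)

theory Defs
  imports "HOL-Analysis.Analysis"
begin

text \<open>Sequences in M^{Z_+} are
functions sigma :: nat => 'm with all values in M.\<close>

fun ifs_comp :: "('m \<Rightarrow> 'z \<Rightarrow> 'z) \<Rightarrow> (nat \<Rightarrow> 'm) \<Rightarrow> nat \<Rightarrow> 'z \<Rightarrow> 'z" where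
  "ifs_comp h \<sigma> 0 = id"
| "ifs_comp h \<sigma> (Suc n) = h (\<sigma> n) \<circ> ifs_comp h \<sigma> n"

definition avg_pseudo_orbit ::
  "('z \<Rightarrow> 'z \<Rightarrow> real) \<Rightarrow> 'm set \<Rightarrow> ('m \<Rightarrow> 'z \<Rightarrow> 'z) \<Rightarrow> real \<Rightarrow> (nat \<Rightarrow> 'z) \<Rightarrow> bool" where
  "avg_pseudo_orbit \<rho> M h \<delta> z \<longleftrightarrow>
     (\<exists>N::nat. \<exists>\<sigma>. (\<forall>i. \<sigma> i \<in> M) \<and>
        (\<forall>n\<ge>N. (1 / real n) * (\<Sum>i<n. \<rho> (h (\<sigma> i) (z i)) (z (Suc i))) < \<delta>))"

definition avg_shadowed ::
  "('z \<Rightarrow> 'z \<Rightarrow> real) \<Rightarrow> 'm set \<Rightarrow> ('m \<Rightarrow> 'z \<Rightarrow> 'z) \<Rightarrow> real \<Rightarrow> (nat \<Rightarrow> 'z) \<Rightarrow> 'z \<Rightarrow> bool" where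
  "avg_shadowed \<rho> M h \<epsilon> z w \<longleftrightarrow>
     (\<exists>\<sigma>. (\<forall>i. \<sigma> i \<in> M) \<and>
        limsup (\<lambda>n. ereal ((1 / real n) * (\<Sum>i<n. \<rho> (ifs_comp h \<sigma> i w) (z i)))) < ereal \<epsilon>)"

definition average_shadowing ::
  "('z \<Rightarrow> 'z \<Rightarrow> real) \<Rightarrow> 'm set \<Rightarrow> ('m \<Rightarrow> 'z \<Rightarrow> 'z) \<Rightarrow> bool" where
  "average_shadowing \<rho> M h \<longleftrightarrow>
     (\<forall>\<epsilon>>0. \<exists>\<delta>>0. \<forall>z. avg_pseudo_orbit \<rho> M h \<delta> z \<longrightarrow> (\<exists>w. avg_shadowed \<rho> M h \<epsilon> z w))"

definition max_dist :: "('a::metric_space \<times> 'b::metric_space) \<Rightarrow> ('a \<times> 'b) \<Rightarrow> real" where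
  "max_dist p q = max (dist (fst p) (fst q)) (dist (snd p) (snd q))"

definition prod_ifs :: "('l \<Rightarrow> 'a \<Rightarrow> 'a) \<Rightarrow> ('g \<Rightarrow> 'b \<Rightarrow> 'b) \<Rightarrow> ('l \<times> 'g) \<Rightarrow> ('a \<times> 'b) \<Rightarrow> ('a \<times> 'b)" where
  "prod_ifs f g lg xy = (f (fst lg) (fst xy), g (snd lg) (snd xy))"

end

theory Submission
  imports Defs
begin

text \<open>Both coordinate projections are 1-Lipschitz for the max metric and semiconjugate
  the product system to its factors, so average pseudo-orbits and shadowing orbits project;
  a pseudo-orbit of one factor lifts to one of the product by pairing it with a true orbit of
  the other factor. Conversely, given a product pseudo-orbit, shadow both projections with
  accuracy \<open>\<epsilon>/2\<close> and pair the shadowing points: since the max metric is bounded by the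
  sum of the coordinate distances and limsup is subadditive, the pair shadows with accuracy
  \<open>\<epsilon>\<close>. Neither finiteness of the index sets, continuity nor completeness is used.\<close>

lemma ifs_comp_semiconj:
  assumes "\<And>i. \<sigma> i \<in> M" "\<And>m x. m \<in> M \<Longrightarrow> q (h m x) = h' (p m) (q x)"
  shows "q (ifs_comp h \<sigma> i x) = ifs_comp h' (p \<circ> \<sigma>) i (q x)"
  using assms by (induction i) auto

lemma ifs_comp_prod_ifs:
  "ifs_comp (prod_ifs f g) \<sigma> i (a, b) =
     (ifs_comp f (fst \<circ> \<sigma>) i a, ifs_comp g (snd \<circ> \<sigma>) i b)"
  by (induction i) (auto simp: prod_ifs_def)

lemma average_le_average:
  assumes "\<And>i. (u i :: real) \<le> v i"
  shows "(1 / real n) * (\<Sum>i<n. u i) \<le> (1 / real n) * (\<Sum>i<n. v i)"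
  using assms by (intro mult_left_mono sum_mono) auto

lemma limsup_average_mono:
  assumes "\<And>i. (u i :: real) \<le> v i"
  shows "limsup (\<lambda>n. ereal ((1 / real n) * (\<Sum>i<n. u i)))
       \<le> limsup (\<lambda>n. ereal ((1 / real n) * (\<Sum>i<n. v i)))"
  by (rule Limsup_mono) (use average_le_average[OF assms] in auto)

lemma limsup_average_add_le:
  "limsup (\<lambda>n. ereal ((1 / real n) * (\<Sum>i<n. u i + v i)))
     \<le> limsup (\<lambda>n. ereal ((1 / real n) * (\<Sum>i<n. u i)))
       + limsup (\<lambda>n. ereal ((1 / real n) * (\<Sum>i<n. v i)))"
proof -
  have "(\<lambda>n. ereal ((1 / real n) * (\<Sum>i<n. u i + v i)))
      = (\<lambda>n. ereal ((1 / real n) * (\<Sum>i<n. u i)) + ereal ((1 / real n) * (\<Sum>i<n. v i)))"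
    by (simp add: sum.distrib distrib_left)
  then show ?thesis by (simp only: ereal_limsup_add_mono)
qed

lemma avg_pseudo_orbit_mono:
  assumes "avg_pseudo_orbit \<rho> M h \<delta> z" "\<delta> \<le> \<delta>'"
  shows "avg_pseudo_orbit \<rho> M h \<delta>' z"
  using assms unfolding avg_pseudo_orbit_def by (meson less_le_trans)

lemma max_dist_fst_le: "dist (fst p) (fst q) \<le> max_dist p q"
  and max_dist_snd_le: "dist (snd p) (snd q) \<le> max_dist p q"
  and max_dist_le_add: "max_dist p q \<le> dist (fst p) (fst q) + dist (snd p) (snd q)"
  by (auto simp: max_dist_def)

locale ifs_factor =
  fixes \<rho> :: "'z \<Rightarrow> 'z \<Rightarrow> real" and M :: "'m set" and h :: "'m \<Rightarrow> 'z \<Rightarrow> 'z"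
    and \<rho>' :: "'y \<Rightarrow> 'y \<Rightarrow> real" and M' :: "'n set" and h' :: "'n \<Rightarrow> 'y \<Rightarrow> 'y"
    and p :: "'m \<Rightarrow> 'n" and q :: "'z \<Rightarrow> 'y"
  assumes params: "p ` M \<subseteq> M'"
    and semiconj: "\<And>m x. m \<in> M \<Longrightarrow> q (h m x) = h' (p m) (q x)"
    and lipschitz: "\<And>x y. \<rho>' (q x) (q y) \<le> \<rho> x y"
begin

lemma avg_pseudo_orbit_factor:
  assumes "avg_pseudo_orbit \<rho> M h \<delta> z"
  shows "avg_pseudo_orbit \<rho>' M' h' \<delta> (q \<circ> z)"
proof -
  obtain N \<sigma> where \<sigma>: "\<And>i. \<sigma> i \<in> M"
    and small: "\<And>n. n \<ge> N \<Longrightarrow> (1 / real n) * (\<Sum>i<n. \<rho> (h (\<sigma> i) (z i)) (z (Suc i))) < \<delta>"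
    using assms unfolding avg_pseudo_orbit_def by blast
  have "(1 / real n) * (\<Sum>i<n. \<rho>' (h' (p (\<sigma> i)) (q (z i))) (q (z (Suc i))))
          \<le> (1 / real n) * (\<Sum>i<n. \<rho> (h (\<sigma> i) (z i)) (z (Suc i)))" for n
    by (rule average_le_average) (metis \<sigma> semiconj lipschitz)
  with small have "\<And>n. n \<ge> N \<Longrightarrow>
      (1 / real n) * (\<Sum>i<n. \<rho>' (h' (p (\<sigma> i)) (q (z i))) (q (z (Suc i)))) < \<delta>"
    by (meson le_less_trans)
  moreover have "\<And>i. p (\<sigma> i) \<in> M'" using \<sigma> params by blast
  ultimately show ?thesis
    unfolding avg_pseudo_orbit_def by (intro exI[of _ N] exI[of _ "p \<circ> \<sigma>"]) auto
qed

lemma avg_shadowed_factor: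
  assumes "avg_shadowed \<rho> M h \<epsilon> z w"
  shows "avg_shadowed \<rho>' M' h' \<epsilon> (q \<circ> z) (q w)"
proof -
  obtain \<sigma> where \<sigma>: "\<And>i. \<sigma> i \<in> M"
    and close: "limsup (\<lambda>n. ereal ((1 / real n) * (\<Sum>i<n. \<rho> (ifs_comp h \<sigma> i w) (z i)))) < ereal \<epsilon>"
    using assms unfolding avg_shadowed_def by blast
  have orbit: "q (ifs_comp h \<sigma> i w) = ifs_comp h' (p \<circ> \<sigma>) i (q w)" for i
    using \<sigma> semiconj by (rule ifs_comp_semiconj)
  have "limsup (\<lambda>n. ereal ((1 / real n) * (\<Sum>i<n. \<rho>' (ifs_comp h' (p \<circ> \<sigma>) i (q w)) ((q \<circ> z) i))))
      \<le> limsup (\<lambda>n. ereal ((1 / real n) * (\<Sum>i<n. \<rho> (ifs_comp h \<sigma> i w) (z i))))"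
    by (rule limsup_average_mono) (use lipschitz in \<open>simp add: orbit[symmetric]\<close>)
  then have "limsup (\<lambda>n. ereal ((1 / real n) *
      (\<Sum>i<n. \<rho>' (ifs_comp h' (p \<circ> \<sigma>) i (q w)) ((q \<circ> z) i)))) < ereal \<epsilon>"
    using close by (rule order.strict_trans1)
  moreover have "\<forall>i. (p \<circ> \<sigma>) i \<in> M'" using \<sigma> params by auto
  ultimately show ?thesis
    unfolding avg_shadowed_def by blast
qed

lemma average_shadowing_factor:
  assumes shadowing: "average_shadowing \<rho> M h"
    and lift: "\<And>\<delta> x. avg_pseudo_orbit \<rho>' M' h' \<delta> x \<Longrightarrow>
                 \<exists>z. avg_pseudo_orbit \<rho> M h \<delta> z \<and> q \<circ> z = x"
  shows "average_shadowing \<rho>' M' h'"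
  unfolding average_shadowing_def
proof (intro allI impI)
  fix \<epsilon> :: real assume "\<epsilon> > 0"
  then obtain \<delta> where "\<delta> > 0" and \<delta>: "\<And>z. avg_pseudo_orbit \<rho> M h \<delta> z \<Longrightarrow>
      \<exists>w. avg_shadowed \<rho> M h \<epsilon> z w"
    using shadowing unfolding average_shadowing_def by blast
  have "\<exists>w. avg_shadowed \<rho>' M' h' \<epsilon> x w" if x: "avg_pseudo_orbit \<rho>' M' h' \<delta> x" for x
  proof -
    obtain z where "avg_pseudo_orbit \<rho> M h \<delta> z" and "q \<circ> z = x"
      using lift[OF x] by blast
    with \<delta> avg_shadowed_factor show ?thesis by metis
  qed
  with \<open>\<delta> > 0\<close> show "\<exists>\<delta>>0. \<forall>x. avg_pseudo_orbit \<rho>' M' h' \<delta> x \<longrightarrow>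
      (\<exists>w. avg_shadowed \<rho>' M' h' \<epsilon> x w)" by blast
qed

end

lemma ifs_factor_fst: "ifs_factor max_dist (\<Lambda> \<times> \<Gamma>) (prod_ifs f g) dist \<Lambda> f fst fst"
  by unfold_locales (auto simp: prod_ifs_def max_dist_fst_le)

lemma ifs_factor_snd: "ifs_factor max_dist (\<Lambda> \<times> \<Gamma>) (prod_ifs f g) dist \<Gamma> g snd snd"
  by unfold_locales (auto simp: prod_ifs_def max_dist_snd_le)

lemma avg_pseudo_orbit_prod_lift_fst:
  assumes "avg_pseudo_orbit dist \<Lambda> f \<delta> x" "c \<in> \<Gamma>"
  shows "avg_pseudo_orbit max_dist (\<Lambda> \<times> \<Gamma>) (prod_ifs f g) \<delta>
           (\<lambda>i. (x i, ifs_comp g (\<lambda>_. c) i y))"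
proof -
  obtain N \<sigma> where "\<forall>i. \<sigma> i \<in> \<Lambda>"
    and "\<forall>n\<ge>N. (1 / real n) * (\<Sum>i<n. dist (f (\<sigma> i) (x i)) (x (Suc i))) < \<delta>"
    using assms(1) unfolding avg_pseudo_orbit_def by blast
  with assms(2) show ?thesis
    unfolding avg_pseudo_orbit_def
    by (intro exI[of _ N] exI[of _ "\<lambda>i. (\<sigma> i, c)"]) (simp add: prod_ifs_def max_dist_def)
qed

lemma avg_pseudo_orbit_prod_lift_snd:
  assumes "avg_pseudo_orbit dist \<Gamma> g \<delta> y" "l \<in> \<Lambda>"
  shows "avg_pseudo_orbit max_dist (\<Lambda> \<times> \<Gamma>) (prod_ifs f g) \<delta>
           (\<lambda>i. (ifs_comp f (\<lambda>_. l) i x, y i))"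
proof -
  obtain N \<sigma> where "\<forall>i. \<sigma> i \<in> \<Gamma>"
    and "\<forall>n\<ge>N. (1 / real n) * (\<Sum>i<n. dist (g (\<sigma> i) (y i)) (y (Suc i))) < \<delta>"
    using assms(1) unfolding avg_pseudo_orbit_def by blast
  with assms(2) show ?thesis
    unfolding avg_pseudo_orbit_def
    by (intro exI[of _ N] exI[of _ "\<lambda>i. (l, \<sigma> i)"]) (simp add: prod_ifs_def max_dist_def)
qed

lemma average_shadowing_prod_factor_fst:
  assumes "average_shadowing max_dist (\<Lambda> \<times> \<Gamma>) (prod_ifs f g)" "\<Gamma> \<noteq> {}"
  shows "average_shadowing dist \<Lambda> f"
proof -
  obtain c where "c \<in> \<Gamma>" using assms(2) by blast
  show ?thesis
  proof (rule ifs_factor.average_shadowing_factor[OF ifs_factor_fst assms(1)])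
    fix \<delta> x assume "avg_pseudo_orbit dist \<Lambda> f \<delta> x"
    then have "avg_pseudo_orbit max_dist (\<Lambda> \<times> \<Gamma>) (prod_ifs f g) \<delta>
        (\<lambda>i. (x i, ifs_comp g (\<lambda>_. c) i undefined))"
      using \<open>c \<in> _\<close> by (rule avg_pseudo_orbit_prod_lift_fst)
    moreover have "fst \<circ> (\<lambda>i. (x i, ifs_comp g (\<lambda>_. c) i undefined)) = x" by auto
    ultimately show
      "\<exists>z. avg_pseudo_orbit max_dist (\<Lambda> \<times> \<Gamma>) (prod_ifs f g) \<delta> z \<and> fst \<circ> z = x"
      by blast
  qed
qed

lemma average_shadowing_prod_factor_snd:
  assumes "average_shadowing max_dist (\<Lambda> \<times> \<Gamma>) (prod_ifs f g)" "\<Lambda> \<noteq> {}"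
  shows "average_shadowing dist \<Gamma> g"
proof -
  obtain l where "l \<in> \<Lambda>" using assms(2) by blast
  show ?thesis
  proof (rule ifs_factor.average_shadowing_factor[OF ifs_factor_snd assms(1)])
    fix \<delta> x assume "avg_pseudo_orbit dist \<Gamma> g \<delta> x"
    then have "avg_pseudo_orbit max_dist (\<Lambda> \<times> \<Gamma>) (prod_ifs f g) \<delta>
        (\<lambda>i. (ifs_comp f (\<lambda>_. l) i undefined, x i))"
      using \<open>l \<in> _\<close> by (rule avg_pseudo_orbit_prod_lift_snd)
    moreover have "snd \<circ> (\<lambda>i. (ifs_comp f (\<lambda>_. l) i undefined, x i)) = x" by auto
    ultimately show
      "\<exists>z. avg_pseudo_orbit max_dist (\<Lambda> \<times> \<Gamma>) (prod_ifs f g) \<delta> z \<and> snd \<circ> z = x"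
      by blast
  qed
qed

lemma avg_shadowed_prod:
  assumes "avg_shadowed dist \<Lambda> f \<epsilon>\<^sub>1 (fst \<circ> z) a" "avg_shadowed dist \<Gamma> g \<epsilon>\<^sub>2 (snd \<circ> z) b"
  shows "avg_shadowed max_dist (\<Lambda> \<times> \<Gamma>) (prod_ifs f g) (\<epsilon>\<^sub>1 + \<epsilon>\<^sub>2) z (a, b)"
proof -
  obtain \<sigma> where \<sigma>: "\<forall>i. \<sigma> i \<in> \<Lambda>"
    and close\<^sub>1: "limsup (\<lambda>n. ereal ((1 / real n) * (\<Sum>i<n. dist (ifs_comp f \<sigma> i a) ((fst \<circ> z) i))))
                 < ereal \<epsilon>\<^sub>1"
    using assms(1) unfolding avg_shadowed_def by blast
  obtain \<tau> where \<tau>: "\<forall>i. \<tau> i \<in> \<Gamma>"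
    and close\<^sub>2: "limsup (\<lambda>n. ereal ((1 / real n) * (\<Sum>i<n. dist (ifs_comp g \<tau> i b) ((snd \<circ> z) i))))
                 < ereal \<epsilon>\<^sub>2"
    using assms(2) unfolding avg_shadowed_def by blast
  define \<pi> where "\<pi> i = (\<sigma> i, \<tau> i)" for i
  have orbit: "ifs_comp (prod_ifs f g) \<pi> i (a, b) = (ifs_comp f \<sigma> i a, ifs_comp g \<tau> i b)" for i
    by (simp add: ifs_comp_prod_ifs \<pi>_def comp_def)
  have "limsup (\<lambda>n. ereal ((1 / real n) * (\<Sum>i<n. max_dist (ifs_comp (prod_ifs f g) \<pi> i (a, b)) (z i))))
      \<le> limsup (\<lambda>n. ereal ((1 / real n) *
           (\<Sum>i<n. dist (ifs_comp f \<sigma> i a) ((fst \<circ> z) i) + dist (ifs_comp g \<tau> i b) ((snd \<circ> z) i))))"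
    by (rule limsup_average_mono)
      (use max_dist_le_add[of "ifs_comp (prod_ifs f g) \<pi> _ (a, b)" "z _"] in \<open>simp add: orbit\<close>)
  also have "\<dots> \<le> limsup (\<lambda>n. ereal ((1 / real n) * (\<Sum>i<n. dist (ifs_comp f \<sigma> i a) ((fst \<circ> z) i))))
      + limsup (\<lambda>n. ereal ((1 / real n) * (\<Sum>i<n. dist (ifs_comp g \<tau> i b) ((snd \<circ> z) i))))"
    by (rule limsup_average_add_le)
  also have "\<dots> < ereal \<epsilon>\<^sub>1 + ereal \<epsilon>\<^sub>2"
    using close\<^sub>1 close\<^sub>2 by (rule ereal_add_strict_mono2)
  also have "\<dots> = ereal (\<epsilon>\<^sub>1 + \<epsilon>\<^sub>2)" by simp
  finally have "limsup (\<lambda>n. ereal ((1 / real n) *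
      (\<Sum>i<n. max_dist (ifs_comp (prod_ifs f g) \<pi> i (a, b)) (z i)))) < ereal (\<epsilon>\<^sub>1 + \<epsilon>\<^sub>2)" .
  moreover have "\<forall>i. \<pi> i \<in> \<Lambda> \<times> \<Gamma>" using \<sigma> \<tau> by (simp add: \<pi>_def)
  ultimately show ?thesis
    unfolding avg_shadowed_def by blast
qed

lemma average_shadowing_prod:
  assumes F: "average_shadowing dist \<Lambda> f" and G: "average_shadowing dist \<Gamma> g"
  shows "average_shadowing max_dist (\<Lambda> \<times> \<Gamma>) (prod_ifs f g)"
  unfolding average_shadowing_def
proof (intro allI impI)
  fix \<epsilon> :: real assume "\<epsilon> > 0"
  then obtain \<delta>\<^sub>1 where "\<delta>\<^sub>1 > 0" and \<delta>\<^sub>1: "\<And>x. avg_pseudo_orbit dist \<Lambda> f \<delta>\<^sub>1 x \<Longrightarrow>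
      \<exists>a. avg_shadowed dist \<Lambda> f (\<epsilon>/2) x a"
    using F unfolding average_shadowing_def by (meson half_gt_zero)
  obtain \<delta>\<^sub>2 where "\<delta>\<^sub>2 > 0" and \<delta>\<^sub>2: "\<And>y. avg_pseudo_orbit dist \<Gamma> g \<delta>\<^sub>2 y \<Longrightarrow>
      \<exists>b. avg_shadowed dist \<Gamma> g (\<epsilon>/2) y b"
    using G \<open>\<epsilon> > 0\<close> unfolding average_shadowing_def by (meson half_gt_zero)
  have shadow: "\<exists>w. avg_shadowed max_dist (\<Lambda> \<times> \<Gamma>) (prod_ifs f g) \<epsilon> z w"
    if "avg_pseudo_orbit max_dist (\<Lambda> \<times> \<Gamma>) (prod_ifs f g) (min \<delta>\<^sub>1 \<delta>\<^sub>2) z" for z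
  proof -
    have "avg_pseudo_orbit dist \<Lambda> f (min \<delta>\<^sub>1 \<delta>\<^sub>2) (fst \<circ> z)"
      by (rule ifs_factor.avg_pseudo_orbit_factor[OF ifs_factor_fst that])
    then obtain a where a: "avg_shadowed dist \<Lambda> f (\<epsilon>/2) (fst \<circ> z) a"
      using \<delta>\<^sub>1 avg_pseudo_orbit_mono by (meson min.cobounded1)
    have "avg_pseudo_orbit dist \<Gamma> g (min \<delta>\<^sub>1 \<delta>\<^sub>2) (snd \<circ> z)"
      by (rule ifs_factor.avg_pseudo_orbit_factor[OF ifs_factor_snd that])
    then obtain b where b: "avg_shadowed dist \<Gamma> g (\<epsilon>/2) (snd \<circ> z) b"
      using \<delta>\<^sub>2 avg_pseudo_orbit_mono by (meson min.cobounded2)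
    have "avg_shadowed max_dist (\<Lambda> \<times> \<Gamma>) (prod_ifs f g) (\<epsilon>/2 + \<epsilon>/2) z (a, b)"
      using a b by (rule avg_shadowed_prod)
    then show ?thesis by (intro exI[of _ "(a, b)"]) simp
  qed
  show "\<exists>\<delta>>0. \<forall>z. avg_pseudo_orbit max_dist (\<Lambda> \<times> \<Gamma>) (prod_ifs f g) \<delta> z \<longrightarrow>
      (\<exists>w. avg_shadowed max_dist (\<Lambda> \<times> \<Gamma>) (prod_ifs f g) \<epsilon> z w)"
  proof (intro exI[of _ "min \<delta>\<^sub>1 \<delta>\<^sub>2"] conjI allI impI)
    show "min \<delta>\<^sub>1 \<delta>\<^sub>2 > 0" using \<open>\<delta>\<^sub>1 > 0\<close> \<open>\<delta>\<^sub>2 > 0\<close> by simp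
  next
    fix z
    assume "avg_pseudo_orbit max_dist (\<Lambda> \<times> \<Gamma>) (prod_ifs f g) (min \<delta>\<^sub>1 \<delta>\<^sub>2) z"
    then show "\<exists>w. avg_shadowed max_dist (\<Lambda> \<times> \<Gamma>) (prod_ifs f g) \<epsilon> z w" by (rule shadow)
  qed
qed

theorem mainTheorem4:
  fixes f :: "'l \<Rightarrow> 'a::{metric_space,complete_space} \<Rightarrow> 'a"
    and g :: "'g \<Rightarrow> 'b::{metric_space,complete_space} \<Rightarrow> 'b"
    and \<Lambda> :: "'l set" and \<Gamma> :: "'g set"
  assumes "finite \<Lambda>" "\<Lambda> \<noteq> {}" "\<And>l. l \<in> \<Lambda> \<Longrightarrow> continuous_on UNIV (f l)"
    and "finite \<Gamma>" "\<Gamma> \<noteq> {}" "\<And>c. c \<in> \<Gamma> \<Longrightarrow> continuous_on UNIV (g c)"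
  shows "average_shadowing max_dist (\<Lambda> \<times> \<Gamma>) (prod_ifs f g) \<longleftrightarrow>
           (average_shadowing dist \<Lambda> f \<and> average_shadowing dist \<Gamma> g)"
proof
  assume prod: "average_shadowing max_dist (\<Lambda> \<times> \<Gamma>) (prod_ifs f g)"
  show "average_shadowing dist \<Lambda> f \<and> average_shadowing dist \<Gamma> g"
    using average_shadowing_prod_factor_fst[OF prod \<open>\<Gamma> \<noteq> {}\<close>]
      average_shadowing_prod_factor_snd[OF prod \<open>\<Lambda> \<noteq> {}\<close>] ..
next
  assume "average_shadowing dist \<Lambda> f \<and> average_shadowing dist \<Gamma> g"
  then show "average_shadowing max_dist (\<Lambda> \<times> \<Gamma>) (prod_ifs f g)"
    by (elim conjE) (rule average_shadowing_prod)
qed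

end
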